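(* Let $p>1$ and let $\widetilde{T}_0, T$ be constants with $0\le\widetilde{T}_0<T$. Suppose that $A\in C^1([\widetilde{T}_0,T))$, $B\in C^1([0,T))$ and $m\in C^1([0,T))$ are strictly positive functions, that $B$ is decreasing, and that there are constants $\overline{m},\underline{m}>0$ with $\underline{m}\le m(t)\le\overline{m}$ for $t\ge0$. Define \[ h(t):=B(t)^{1/2}A(t)^{(p-1)/2-\delta}, \] where $\delta$ is a constant with $0<\delta<(p-1)/2$ such that $h'(t)\ge0$ for $t\ge\widetilde{T}_0$. Assume that $F\in C^2([0,T))$ satisfies \[ F(t)\ge A(t)\ \text{for } t\ge\widetilde{T}_0,\qquad \{m(t)F'(t)\}'\ge B(t)|F(t)|^p\ \text{for } t\ge0, \] \[ F(0)\ge0,\quad F'(0)\ge0,\quad F(0)+F'(0)>0 . \] If $F'(0)=0$, suppose moreover that there exists a time $\widetilde{t}>0$ such that $F(\widetilde{t})\ge 2F(0)$. Define $\widetilde{T}_1:=\overline{m}\,\underline{m}^{-1}F(0)/F'(0)$ if $F'(0)\ne0$, and $\widetilde{T}_1:=\widetilde{t}$ if $F'(0)=0$. Then, for $\widetilde{T}\ge\max\{\widetilde{T}_0,\widetilde{T}_1\}$, we have $T\le 3\widetilde{T}$, provided that \[ \widetilde{T}\,h(\widetilde{T})\,A(\widetilde{T})^{\delta}\ge \delta^{-1}\,\overline{m}\sqrt{(p+1)/\underline{m}} . \] *)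

theory Defs
  imports "HOL-Analysis.Analysis"
begin

end

theory Submission
  imports Defs
begin

(* The flux m F' is nondecreasing, so F' >= 0 and F grows at least linearly; hence F >= 2 F(0)
   from time Tt on.  Multiplying {m F'}' >= B F^p by m F' and using that B decreases gives the
   energy bound (m F')^2(s) >= 2 mlow B(s) / (p + 1) * (F(s)^(p+1) - F(0)^(p+1)), which for
   F(s) >= 2 F(0) and F >= A turns into the Riccati-type inequality F' >= c F^(1+\<delta>) with
   c = sqrt (mlow / (p + 1)) / mup * h(Tt), since h is nondecreasing.  Along such a solution
   F^(-\<delta>) + \<delta> c t is nonincreasing, so a solution living on [Tt, 2 Tt] would satisfy
   \<delta> c Tt F(Tt)^\<delta> < 1, contradicting the size condition.  Hence even T <= 2 Tt. *)

lemma DERIV_within_nonneg_imp_increasing_open: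
  fixes f :: "real \<Rightarrow> real"
  assumes "a \<le> b" "{a..b} \<subseteq> S" "continuous_on {a..b} f"
    and "\<And>x. a < x \<Longrightarrow> x < b \<Longrightarrow> \<exists>y. (f has_real_derivative y) (at x within S) \<and> 0 \<le> y"
  shows "f a \<le> f b"
proof (rule DERIV_nonneg_imp_increasing_open[OF assms(1) _ assms(3)])
  fix x assume x: "a < x" "x < b"
  then obtain y where y: "(f has_real_derivative y) (at x within S)" "0 \<le> y"
    using assms(4) by blast
  have "(f has_real_derivative y) (at x within {a..b})"
    using DERIV_subset[OF y(1) assms(2)] .
  moreover have "at x within {a..b} = at x"
    using x by (intro at_within_interior) auto
  ultimately show "\<exists>y. (f has_real_derivative y) (at x) \<and> 0 \<le> y"
    using y(2) by auto
qed

lemma DERIV_within_nonneg_imp_increasing: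
  fixes f :: "real \<Rightarrow> real"
  assumes "a \<le> b" "{a..b} \<subseteq> S"
    and deriv: "\<And>x. x \<in> {a..b} \<Longrightarrow> \<exists>y. (f has_real_derivative y) (at x within S) \<and> 0 \<le> y"
  shows "f a \<le> f b"
proof (rule DERIV_within_nonneg_imp_increasing_open[OF assms(1,2)])
  show "continuous_on {a..b} f"
    unfolding continuous_on_eq_continuous_within
  proof
    fix x assume "x \<in> {a..b}"
    then obtain y where "(f has_real_derivative y) (at x within S)"
      using deriv by blast
    then show "continuous (at x within {a..b}) f"
      using DERIV_subset[OF _ assms(2)] DERIV_continuous by blast
  qed
qed (use deriv in auto)

lemma superlinear_growth_time_bound:
  fixes F F' :: "real \<Rightarrow> real"
  assumes "a \<le> b" "{a..b} \<subseteq> S" "0 < \<delta>" "0 \<le> c"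
    and deriv: "\<And>x. x \<in> {a..b} \<Longrightarrow> (F has_real_derivative F' x) (at x within S)"
    and pos: "\<And>x. x \<in> {a..b} \<Longrightarrow> 0 < F x"
    and growth: "\<And>x. x \<in> {a..b} \<Longrightarrow> c * F x powr (1 + \<delta>) \<le> F' x"
  shows "\<delta> * c * (b - a) * F a powr \<delta> < 1"
proof -
  define \<Phi> where "\<Phi> x = - (F x powr (- \<delta>) + \<delta> * c * x)" for x
  have "\<Phi> a \<le> \<Phi> b"
  proof (rule DERIV_within_nonneg_imp_increasing[OF assms(1,2)])
    fix x assume x: "x \<in> {a..b}"
    have d\<Phi>: "(\<Phi> has_real_derivative \<delta> * (F x powr (- \<delta> - 1) * F' x) - \<delta> * c) (at x within S)"
      unfolding \<Phi>_def using deriv[OF x] pos[OF x]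
      by (auto intro!: derivative_eq_intros simp: algebra_simps)
    have "c = F x powr (- \<delta> - 1) * (c * F x powr (1 + \<delta>))"
      using pos[OF x] by (simp add: powr_add[symmetric])
    also have "\<dots> \<le> F x powr (- \<delta> - 1) * F' x"
      using growth[OF x] by (intro mult_left_mono) auto
    finally show "\<exists>y. (\<Phi> has_real_derivative y) (at x within S) \<and> 0 \<le> y"
      using d\<Phi> assms(3) by (auto simp: mult_left_mono)
  qed
  then have "\<delta> * c * (b - a) \<le> F a powr (- \<delta>) - F b powr (- \<delta>)"
    by (simp add: \<Phi>_def algebra_simps)
  moreover have "0 < F b powr (- \<delta>)"
    using pos[of b] assms(1) by simp
  ultimately have "\<delta> * c * (b - a) < F a powr (- \<delta>)"
    by linarith
  then have "\<delta> * c * (b - a) * F a powr \<delta> < F a powr (- \<delta>) * F a powr \<delta>"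
    using pos[of a] assms(1) by (intro mult_strict_right_mono) auto
  also have "\<dots> = 1"
    using pos[of a] assms(1) by (simp add: powr_add[symmetric])
  finally show ?thesis .
qed

lemma superlinear_growth_lifespan_bound:
  fixes F F' :: "real \<Rightarrow> real"
  assumes "0 \<le> a" "{a..<T} \<subseteq> S" "0 < \<delta>" "0 \<le> c"
    and deriv: "\<And>x. x \<in> {a..<T} \<Longrightarrow> (F has_real_derivative F' x) (at x within S)"
    and pos: "\<And>x. x \<in> {a..<T} \<Longrightarrow> 0 < F x"
    and growth: "\<And>x. x \<in> {a..<T} \<Longrightarrow> c * F x powr (1 + \<delta>) \<le> F' x"
    and large: "1 \<le> \<delta> * c * a * F a powr \<delta>"
  shows "T \<le> 2 * a"
proof (rule ccontr)
  assume "\<not> T \<le> 2 * a"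
  then have "{a..2 * a} \<subseteq> {a..<T}"
    by auto
  then have "\<delta> * c * (2 * a - a) * F a powr \<delta> < 1"
    using assms(1-4) deriv pos growth
    by (intro superlinear_growth_time_bound[where S = S and F' = F']) auto
  with large show False
    by simp
qed

locale flux_inequality =
  fixes p T mlow mup :: real and B m F F' :: "real \<Rightarrow> real"
  assumes p_nonneg: "0 \<le> p"
    and T_pos: "0 < T"
    and F_deriv: "\<And>t. t \<in> {0..<T} \<Longrightarrow> (F has_real_derivative F' t) (at t within {0..<T})"
    and flux_deriv: "\<And>t. t \<in> {0..<T} \<Longrightarrow> \<exists>D. ((\<lambda>s. m s * F' s) has_real_derivative D)
      (at t within {0..<T}) \<and> B t * \<bar>F t\<bar> powr p \<le> D"
    and B_nonneg: "\<And>t. t \<in> {0..<T} \<Longrightarrow> 0 \<le> B t"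
    and B_antimono: "\<And>s t. 0 \<le> s \<Longrightarrow> s \<le> t \<Longrightarrow> t < T \<Longrightarrow> B t \<le> B s"
    and mlow_pos: "0 < mlow"
    and m_range: "\<And>t. t \<in> {0..<T} \<Longrightarrow> mlow \<le> m t \<and> m t \<le> mup"
    and F_initial: "0 \<le> F 0" "0 \<le> F' 0" "0 < F 0 + F' 0"
begin

lemma mup_pos: "0 < mup"
  using m_range[of 0] T_pos mlow_pos by auto

lemma flux_nondecreasing:
  assumes "0 \<le> s" "s \<le> t" "t < T"
  shows "m s * F' s \<le> m t * F' t"
proof (rule DERIV_within_nonneg_imp_increasing[where f = "\<lambda>s. m s * F' s" and S = "{0..<T}"])
  fix x assume "x \<in> {s..t}"
  then have x: "x \<in> {0..<T}"
    using assms by auto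
  then obtain D where "((\<lambda>s. m s * F' s) has_real_derivative D) (at x within {0..<T})"
    and "B x * \<bar>F x\<bar> powr p \<le> D"
    using flux_deriv by blast
  moreover have "0 \<le> B x * \<bar>F x\<bar> powr p"
    using B_nonneg[OF x] by simp
  ultimately show "\<exists>y. ((\<lambda>s. m s * F' s) has_real_derivative y) (at x within {0..<T}) \<and> 0 \<le> y"
    by force
qed (use assms in auto)

lemma F'_nonneg:
  assumes "t \<in> {0..<T}"
  shows "0 \<le> F' t"
proof -
  have "0 \<le> m 0 * F' 0"
    using m_range[of 0] T_pos mlow_pos F_initial by simp
  also have "\<dots> \<le> m t * F' t"
    using flux_nondecreasing assms by simp
  finally show ?thesis
    using m_range[OF assms] mlow_pos by (simp add: zero_le_mult_iff)
qed

lemma F'_lower_bound: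
  assumes "t \<in> {0..<T}"
  shows "mlow * F' 0 \<le> mup * F' t"
proof -
  have "mlow * F' 0 \<le> m 0 * F' 0"
    using m_range[of 0] T_pos F_initial by (simp add: mult_right_mono)
  also have "\<dots> \<le> m t * F' t"
    using flux_nondecreasing assms by simp
  also have "\<dots> \<le> mup * F' t"
    using m_range[OF assms] F'_nonneg[OF assms] by (simp add: mult_right_mono)
  finally show ?thesis .
qed

lemma F_nondecreasing:
  assumes "0 \<le> s" "s \<le> t" "t < T"
  shows "F s \<le> F t"
proof (rule DERIV_within_nonneg_imp_increasing[where f = F and S = "{0..<T}"])
  fix x assume "x \<in> {s..t}"
  then have "x \<in> {0..<T}"
    using assms by auto
  then show "\<exists>y. (F has_real_derivative y) (at x within {0..<T}) \<and> 0 \<le> y"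
    using F_deriv F'_nonneg by blast
qed (use assms in auto)

lemma F_linear_lower_bound:
  assumes "t \<in> {0..<T}"
  shows "F 0 + mlow / mup * F' 0 * t \<le> F t"
proof -
  let ?c = "mlow / mup * F' 0"
  have "F 0 - ?c * 0 \<le> F t - ?c * t"
  proof (rule DERIV_within_nonneg_imp_increasing[where f = "\<lambda>s. F s - ?c * s" and S = "{0..<T}"])
    fix s assume s: "s \<in> {0..t}"
    then have "((\<lambda>s. F s - ?c * s) has_real_derivative F' s - ?c) (at s within {0..<T})"
      using assms F_deriv[of s] mup_pos by (auto intro!: derivative_eq_intros)
    moreover have "0 \<le> F' s - ?c"
      using F'_lower_bound[of s] s assms mup_pos by (simp add: field_simps)
    ultimately show "\<exists>y. ((\<lambda>s. F s - ?c * s) has_real_derivative y) (at s within {0..<T}) \<and> 0 \<le> y"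
      by blast
  qed (use assms in auto)
  then show ?thesis
    by simp
qed

lemma F_pos:
  assumes "0 < t" "t < T"
  shows "0 < F t"
proof -
  have "0 < F 0 + mlow / mup * F' 0 * t"
  proof (cases "F 0 = 0")
    case True
    then show ?thesis
      using F_initial mlow_pos mup_pos assms by simp
  next
    case False
    moreover have "0 \<le> mlow / mup * F' 0 * t"
      using F_initial mlow_pos mup_pos assms by simp
    ultimately show ?thesis
      using F_initial by simp
  qed
  then show ?thesis
    using F_linear_lower_bound[of t] assms by simp
qed

lemma F_doubles:
  assumes "F' 0 \<noteq> 0" "mup / mlow * F 0 / F' 0 \<le> t" "t < T"
  shows "2 * F 0 \<le> F t"
proof -
  have "0 \<le> mup / mlow * F 0 / F' 0"
    using F_initial mlow_pos mup_pos by simp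
  then have t: "t \<in> {0..<T}"
    using assms(2,3) by simp
  have "F 0 = mlow / mup * F' 0 * (mup / mlow * F 0 / F' 0)"
    using assms(1) mlow_pos mup_pos by simp
  also have "\<dots> \<le> mlow / mup * F' 0 * t"
    using assms(2) F_initial mlow_pos mup_pos by (intro mult_left_mono) auto
  finally show ?thesis
    using F_linear_lower_bound[OF t] by simp
qed

lemma energy_inequality:
  assumes s: "s \<in> {0..<T}"
  shows "2 * mlow * B s / (p + 1) * (F s powr (p + 1) - F 0 powr (p + 1)) \<le> (m s * F' s)\<^sup>2"
proof -
  define K where "K = 2 * mlow * B s / (p + 1)"
  define E where "E x = (m x * F' x)\<^sup>2 - K * F x powr (p + 1)" for x
  \<comment> \<open>Only the open-interval version applies: \<open>F 0\<close> may vanish, and there \<open>powr\<close> has no derivative.\<close>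
  have "E 0 \<le> E s"
  proof (rule DERIV_within_nonneg_imp_increasing_open[where f = E and S = "{0..<T}"])
    have flux_cont: "continuous_on {0..<T} (\<lambda>s. m s * F' s)"
      unfolding continuous_on_eq_continuous_within using flux_deriv DERIV_continuous by blast
    have F_cont: "continuous_on {0..<T} F"
      using F_deriv by (rule DERIV_continuous_on)
    have "\<forall>x\<in>{0..<T}. 0 \<le> F x"
      using F_pos F_initial by (metis atLeastLessThan_iff less_eq_real_def)
    then have "continuous_on {0..<T} E"
      unfolding E_def using p_nonneg by (intro continuous_intros flux_cont continuous_on_powr' F_cont) auto
    then show "continuous_on {0..s} E"
      by (rule continuous_on_subset) (use s in auto)
  next
    fix x assume x: "0 < x" "x < s"
    then have xT: "x \<in> {0..<T}" and Fx: "0 < F x"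
      using s F_pos by auto
    obtain D where D: "((\<lambda>s. m s * F' s) has_real_derivative D) (at x within {0..<T})"
      and D_ge: "B x * \<bar>F x\<bar> powr p \<le> D"
      using flux_deriv[OF xT] by blast
    have "((\<lambda>x. (m x * F' x)\<^sup>2) has_real_derivative 2 * (m x * F' x) * D) (at x within {0..<T})"
      using DERIV_power[OF D, of 2] by (simp add: algebra_simps)
    moreover have "((\<lambda>x. F x powr (p + 1)) has_real_derivative (p + 1) * F x powr p * F' x)
        (at x within {0..<T})"
      using F_deriv[OF xT] Fx by (auto intro!: derivative_eq_intros)
    ultimately have dE: "(E has_real_derivative 2 * (m x * F' x) * D - K * ((p + 1) * F x powr p * F' x))
        (at x within {0..<T})"
      unfolding E_def by (intro DERIV_diff DERIV_cmult)
    have "K * ((p + 1) * F x powr p * F' x) = 2 * (mlow * F' x) * (B s * F x powr p)"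
      unfolding K_def using p_nonneg by (simp add: field_simps)
    also have "\<dots> \<le> 2 * (m x * F' x) * (B x * F x powr p)"
      using m_range[OF xT] mlow_pos F'_nonneg[OF xT] B_antimono[of x s] B_nonneg[of s] s x
      by (intro mult_mono mult_left_mono mult_right_mono) auto
    also have "\<dots> \<le> 2 * (m x * F' x) * D"
      using D_ge Fx m_range[OF xT] mlow_pos F'_nonneg[OF xT] by (intro mult_left_mono) auto
    finally show "\<exists>y. (E has_real_derivative y) (at x within {0..<T}) \<and> 0 \<le> y"
      using dE by force
  qed (use s in auto)
  then have "K * (F s powr (p + 1) - F 0 powr (p + 1)) \<le> (m s * F' s)\<^sup>2 - (m 0 * F' 0)\<^sup>2"
    by (simp add: E_def algebra_simps)
  moreover have "0 \<le> (m 0 * F' 0)\<^sup>2"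
    by simp
  ultimately show ?thesis
    unfolding K_def by linarith
qed

lemma F'_lower_bound_after_doubling:
  assumes s: "s \<in> {0..<T}" and doubled: "2 * F 0 \<le> F s"
  shows "sqrt (mlow / (p + 1)) / mup * sqrt (B s) * F s powr ((p + 1) / 2) \<le> F' s"
proof -
  have Fs: "0 \<le> F s"
    using doubled F_initial by simp
  have "F 0 powr (p + 1) \<le> (F s / 2) powr (p + 1)"
    using doubled F_initial p_nonneg by (intro powr_mono2) auto
  also have "\<dots> = F s powr (p + 1) / 2 powr (p + 1)"
    using Fs by (simp add: powr_divide)
  also have "\<dots> \<le> F s powr (p + 1) / 2"
    using p_nonneg powr_mono[of 1 "p + 1" 2] by (intro divide_left_mono) auto
  finally have "F s powr (p + 1) / 2 \<le> F s powr (p + 1) - F 0 powr (p + 1)"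
    by simp
  then have "2 * mlow * B s / (p + 1) * (F s powr (p + 1) / 2)
      \<le> 2 * mlow * B s / (p + 1) * (F s powr (p + 1) - F 0 powr (p + 1))"
    using mlow_pos B_nonneg[OF s] p_nonneg by (intro mult_left_mono) auto
  then have "mlow / (p + 1) * B s * F s powr (p + 1)
      \<le> 2 * mlow * B s / (p + 1) * (F s powr (p + 1) - F 0 powr (p + 1))"
    by (simp add: field_simps)
  also have "\<dots> \<le> (m s * F' s)\<^sup>2"
    by (rule energy_inequality[OF s])
  finally have "sqrt (mlow / (p + 1) * B s * F s powr (p + 1)) \<le> m s * F' s"
    using m_range[OF s] mlow_pos F'_nonneg[OF s] by (intro real_le_lsqrt) auto
  also have "\<dots> \<le> mup * F' s"
    using m_range[OF s] F'_nonneg[OF s] by (simp add: mult_right_mono)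
  finally have "sqrt (mlow / (p + 1) * B s * F s powr (p + 1)) \<le> mup * F' s" .
  moreover have "sqrt (mlow / (p + 1) * B s * F s powr (p + 1))
      = sqrt (mlow / (p + 1)) * sqrt (B s) * F s powr ((p + 1) / 2)"
    by (simp only: real_sqrt_mult powr_half_sqrt_powr[OF Fs])
  ultimately show ?thesis
    using mup_pos by (simp add: field_simps)
qed

lemma F'_ge_weighted_power:
  fixes A :: "real \<Rightarrow> real" and \<delta> :: real
  assumes s: "s \<in> {0..<T}" and doubled: "2 * F 0 \<le> F s"
    and A: "0 < A s" "A s \<le> F s" and \<delta>: "\<delta> \<le> (p - 1) / 2"
  shows "sqrt (mlow / (p + 1)) / mup * (sqrt (B s) * A s powr ((p - 1) / 2 - \<delta>)) * F s powr (1 + \<delta>)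
    \<le> F' s"
proof -
  have "sqrt (B s) * A s powr ((p - 1) / 2 - \<delta>) * F s powr (1 + \<delta>)
      \<le> sqrt (B s) * F s powr ((p - 1) / 2 - \<delta>) * F s powr (1 + \<delta>)"
    using A \<delta> B_nonneg[OF s] by (intro mult_right_mono mult_left_mono powr_mono2) auto
  also have "\<dots> = sqrt (B s) * F s powr ((p + 1) / 2)"
  proof -
    have "F s powr ((p - 1) / 2 - \<delta>) * F s powr (1 + \<delta>) = F s powr ((p + 1) / 2)"
      unfolding powr_add[symmetric] by (rule arg_cong[where f = "\<lambda>e. F s powr e"]) (simp add: field_simps)
    then show ?thesis
      by (simp add: mult.assoc)
  qed
  finally have "sqrt (mlow / (p + 1)) / mup * (sqrt (B s) * A s powr ((p - 1) / 2 - \<delta>) * F s powr (1 + \<delta>))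
      \<le> sqrt (mlow / (p + 1)) / mup * (sqrt (B s) * F s powr ((p + 1) / 2))"
    using mup_pos mlow_pos p_nonneg by (intro mult_left_mono) auto
  also have "\<dots> \<le> F' s"
    using F'_lower_bound_after_doubling[OF s doubled] by (simp add: mult.assoc)
  finally show ?thesis
    by (simp add: mult.assoc)
qed

end

theorem lemma3p1:
  fixes p T0 T \<delta> mup mlow Tt tt :: real
    and A A' B B' m m' F F' F'' :: "real \<Rightarrow> real"
  assumes p: "p > 1"
    and T0T: "0 \<le> T0" "T0 < T"
    and A_C1: "\<forall>t\<in>{T0..<T}. (A has_real_derivative A' t) (at t within {T0..<T})"
              "continuous_on {T0..<T} A'"
    and B_C1: "\<forall>t\<in>{0..<T}. (B has_real_derivative B' t) (at t within {0..<T})"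
              "continuous_on {0..<T} B'"
    and m_C1: "\<forall>t\<in>{0..<T}. (m has_real_derivative m' t) (at t within {0..<T})"
              "continuous_on {0..<T} m'"
    and A_pos: "\<forall>t\<in>{T0..<T}. A t > 0"
    and B_pos: "\<forall>t\<in>{0..<T}. B t > 0"
    and m_pos: "\<forall>t\<in>{0..<T}. m t > 0"
    and B_decr: "\<forall>s\<in>{0..<T}. \<forall>t\<in>{0..<T}. s \<le> t \<longrightarrow> B t \<le> B s"
    and m_bounds: "mlow > 0" "mup > 0" "\<forall>t\<in>{0..<T}. mlow \<le> m t \<and> m t \<le> mup"
    and delta: "0 < \<delta>" "\<delta> < (p - 1) / 2"
    and h_mono: "\<forall>t\<in>{T0..<T}. \<exists>D. ((\<lambda>s. sqrt (B s) * A s powr ((p - 1) / 2 - \<delta>))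
                    has_real_derivative D) (at t within {T0..<T}) \<and> D \<ge> 0"
    and F_C2: "\<forall>t\<in>{0..<T}. (F has_real_derivative F' t) (at t within {0..<T})"
              "\<forall>t\<in>{0..<T}. (F' has_real_derivative F'' t) (at t within {0..<T})"
              "continuous_on {0..<T} F''"
    and F_ge_A: "\<forall>t\<in>{T0..<T}. F t \<ge> A t"
    and F_ineq: "\<forall>t\<in>{0..<T}. \<exists>D. ((\<lambda>s. m s * F' s) has_real_derivative D) (at t within {0..<T})
                    \<and> D \<ge> B t * \<bar>F t\<bar> powr p"
    and F_init: "F 0 \<ge> 0" "F' 0 \<ge> 0" "F 0 + F' 0 > 0"
    and tt: "F' 0 = 0 \<Longrightarrow> 0 < tt \<and> tt < T \<and> F tt \<ge> 2 * F 0"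
    and Tt: "Tt \<ge> max T0 (if F' 0 \<noteq> 0 then mup / mlow * F 0 / F' 0 else tt)"
    and cond: "Tt * (sqrt (B Tt) * A Tt powr ((p - 1) / 2 - \<delta>)) * A Tt powr \<delta>
                 \<ge> mup * sqrt ((p + 1) / mlow) / \<delta>"
  shows "T \<le> 3 * Tt"
proof (cases "Tt < T")
  case False
  then show ?thesis
    using T0T Tt by auto
next
  case Tt_lt: True
  have Tt_ge: "T0 \<le> Tt" "0 \<le> Tt"
    using Tt T0T by auto
  interpret flux_inequality p T mlow mup B m F F'
    using p T0T F_C2(1) F_ineq B_pos B_decr m_bounds F_init by unfold_locales (auto simp: less_imp_le)
  define h where "h s = sqrt (B s) * A s powr ((p - 1) / 2 - \<delta>)" for s
  define c where "c = sqrt (mlow / (p + 1)) / mup * h Tt"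
  have h_nondecreasing: "h Tt \<le> h s" if "Tt \<le> s" "s < T" for s
    using h_mono[folded h_def] that Tt_ge
    by (intro DERIV_within_nonneg_imp_increasing[where f = h and S = "{T0..<T}"]) auto
  have growth: "c * F s powr (1 + \<delta>) \<le> F' s" if s: "s \<in> {Tt..<T}" for s
  proof -
    have "2 * F 0 \<le> F s"
      using F_doubles[of s] F_nondecreasing[of tt s] tt Tt s by (cases "F' 0 = 0") auto
    then have "sqrt (mlow / (p + 1)) / mup * h s * F s powr (1 + \<delta>) \<le> F' s"
      unfolding h_def using s Tt_ge A_pos F_ge_A delta by (intro F'_ge_weighted_power) auto
    moreover have "c * F s powr (1 + \<delta>) \<le> sqrt (mlow / (p + 1)) / mup * h s * F s powr (1 + \<delta>)"
      unfolding c_def using h_nondecreasing[of s] s m_bounds p by (intro mult_right_mono mult_left_mono) auto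
    ultimately show ?thesis
      by linarith
  qed
  have ATt: "0 < A Tt" "A Tt \<le> F Tt"
    using A_pos F_ge_A Tt_ge Tt_lt by auto
  have h_nonneg: "0 \<le> h Tt"
    unfolding h_def using B_nonneg[of Tt] Tt_ge Tt_lt by simp
  have "T \<le> 2 * Tt"
  proof (rule superlinear_growth_lifespan_bound[where S = "{0..<T}" and F = F and F' = F'])
    show "0 \<le> c"
      unfolding c_def using h_nonneg m_bounds p by simp
    fix x assume x: "x \<in> {Tt..<T}"
    show "(F has_real_derivative F' x) (at x within {0..<T})"
      using F_deriv x Tt_ge by simp
    show "0 < F x"
      using A_pos[rule_format, of x] F_ge_A[rule_format, of x] x Tt_ge by auto
  next
    have "1 = \<delta> * (sqrt (mlow / (p + 1)) / mup) * (mup * sqrt ((p + 1) / mlow) / \<delta>)"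
      using m_bounds p delta by (simp add: real_sqrt_divide field_simps)
    also have "\<dots> \<le> \<delta> * (sqrt (mlow / (p + 1)) / mup) * (Tt * h Tt * A Tt powr \<delta>)"
      using cond delta m_bounds unfolding h_def by (intro mult_left_mono) auto
    also have "\<dots> \<le> \<delta> * (sqrt (mlow / (p + 1)) / mup) * (Tt * h Tt * F Tt powr \<delta>)"
      using ATt Tt_ge delta m_bounds h_nonneg by (intro mult_left_mono powr_mono2) auto
    finally show "1 \<le> \<delta> * c * Tt * F Tt powr \<delta>"
      by (simp add: c_def algebra_simps)
  qed (use Tt_ge delta growth in auto)
  then show ?thesis
    using Tt_ge by simp
qed

end
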